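(* For every $0\le j\le n$, every player $i\in[n]$ and every transition $\mathbf e\in\mathcal E_{\ge j}$, we have $\lambda^{j^*}_i(\mathbf e)\le|V|\cdot\kappa$, where $\kappa=\max_{e\in E}\ell_e(n)$.
   Context: Dynamic NCG $(\mathcal A,n)$: arena $\mathcal A=(V,E,\mathsf{src},\mathsf{tgt})$, $V$ finite, $E$ a partial function from $V\times V$ to non-decreasing piecewise-affine functions $\mathbb N\to\mathbb N$ (edge $e$ has cost $\ell_e$); $\mathsf{tgt}$ has only a self-loop of cost $0$ and is reachable from all states; players $[n]$. Configurations are maps $[n]\to V$; $c_{\mathsf{tgt}}$ maps all to $\mathsf{tgt}$. A move vector $(e_i)_i$ from $c$ gives the transition $(c,w,c')$, $c'(i)$ the target of $e_i$, $w(i)=\ell_{e_i}(u_i)$ with $u_i=|\{l:e_l=e_i\}|$; $\mathrm{cost}_i(c,c')=w(i)$; $T$ is the set of transitions; $c\Rightarrow c'$ means $(c,w,c')\in T$. For a path $\rho=(t_k)$, $\rho_{\ge k}$ is its suffix from $t_k$ and $\mathrm{cost}_i(\rho)$ the total payment of $i$. $\mathrm{dev}_i(c,c')=\{c''\mid c\Rightarrow c'',\ c''(l)=c'(l)\ \forall l\ne i\}$. $X_m$: configurations with exactly $m$ players at $\mathsf{tgt}$; $X_{\ge m}=\bigcup_{m'\ge m}X_{m'}$; $\mathcal E_m$, $\mathcal E_{\ge m}$: transitions $(c,w,c')$ with $c\in X_m$, resp. $c\in X_{\ge m}$. For $\lambda=(\lambda_i)$, $\lambda_i:\mathcal E_{\ge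 m}\to\mathbb N\cup\{\pm\infty\}$, and $c\in X_{\ge m}$, $\Lambda_\lambda(c)$ is the set of paths $\rho=(t_k)$ from $c$ visiting $c_{\mathsf{tgt}}$ with $\mathrm{cost}_i(\rho_{\ge k})\le\lambda_i(t_k)$ for all $i,k$. Define $\lambda^{n^*}_i(c_{\mathsf{tgt}},0^n,c_{\mathsf{tgt}})=0$ (note $\mathcal E_{\ge n}$ consists only of the self-loop on $c_{\mathsf{tgt}}$). For $j<n$ the $\lambda^{j^*}$-building functions $\mu^k_i:\mathcal E_{\ge j}\to\mathbb N\cup\{\pm\infty\}$ are: $\mu^k_i=\lambda^{(j+1)^*}_i$ on $\mathcal E_{\ge j+1}$; for $\mathbf e=(c,w,c')\in\mathcal E_j$, $\mu^0_i(\mathbf e)=0$ if $c(i)=\mathsf{tgt}$ else $+\infty$; for $k>0$, $\mu^k_i(\mathbf e)=0$ if $c(i)=\mathsf{tgt}$, otherwise $\min_{c''\in\mathrm{dev}_i(c,c')}\sup_{\rho\in\Lambda_{\mu^{k-1}}(c'')}(\mathrm{cost}_i(c,c'')+\mathrm{cost}_i(\rho))$ if $\Lambda_{\mu^{k-1}}(\tilde c)\ne\emptyset$ for all $(c,\tilde w,\tilde c)\in T$, and $-\infty$ otherwise. $\lambda^{j^*}_i$ is the pointwise limit of $(\mu^k_i)_k$ as $k\to\infty$. *)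

theory Defs
  imports "HOL-Library.Extended_Real"
begin

type_synonym 'v edges = "'v \<Rightarrow> 'v \<Rightarrow> (nat \<Rightarrow> nat) option"

text \<open>Configurations of n players: lists of length n (player i is at position c!i, i<n).
  A transition (c,w,c') is determined by (c,c') since w is determined; we represent
  it by the pair (c,c').\<close>
type_synonym 'v transition = "'v list \<times> 'v list"

definition piecewise_affine :: "(nat \<Rightarrow> nat) \<Rightarrow> bool" where
  "piecewise_affine f \<longleftrightarrow> (\<exists>(m::nat) (t::nat \<Rightarrow> nat) (a::nat \<Rightarrow> real) (b::nat \<Rightarrow> real).
     t 0 = 0 \<and> (\<forall>k<m. t k < t (Suc k)) \<and>
     (\<forall>x k. k \<le> m \<and> t k \<le> x \<and> (k < m \<longrightarrow> x < t (Suc k)) \<longrightarrow>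
            real (f x) = a k * real x + b k))"

definition arena :: "'v set \<Rightarrow> 'v edges \<Rightarrow> 'v \<Rightarrow> 'v \<Rightarrow> bool" where
  "arena V E src tgt \<longleftrightarrow> finite V \<and> src \<in> V \<and> tgt \<in> V \<and>
     (\<forall>u v f. E u v = Some f \<longrightarrow> u \<in> V \<and> v \<in> V \<and> mono f \<and> piecewise_affine f) \<and>
     (\<forall>v f. E tgt v = Some f \<longleftrightarrow> v = tgt \<and> f = (\<lambda>_. 0)) \<and>
     (\<forall>u\<in>V. (u, tgt) \<in> {(x, y). E x y \<noteq> None}\<^sup>*)"

definition ecost :: "'v edges \<Rightarrow> 'v \<Rightarrow> 'v \<Rightarrow> nat \<Rightarrow> nat" where
  "ecost E u v k = (case E u v of Some f \<Rightarrow> f k | None \<Rightarrow> 0)"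

definition kappa :: "'v edges \<Rightarrow> nat \<Rightarrow> nat" where
  "kappa E n = Max {f n | u v f. E u v = Some f}"

definition ctgt :: "'v \<Rightarrow> nat \<Rightarrow> 'v list" where
  "ctgt tgt n = replicate n tgt"

definition is_trans :: "'v set \<Rightarrow> 'v edges \<Rightarrow> nat \<Rightarrow> 'v list \<Rightarrow> 'v list \<Rightarrow> bool" where
  "is_trans V E n c c' \<longleftrightarrow> length c = n \<and> length c' = n \<and> set c \<subseteq> V \<and>
     (\<forall>i<n. E (c!i) (c'!i) \<noteq> None)"

definition load :: "'v list \<Rightarrow> 'v list \<Rightarrow> nat \<Rightarrow> nat" where
  "load c c' i = card {l. l < length c \<and> c!l = c!i \<and> c'!l = c'!i}"

definition tcost :: "'v edges \<Rightarrow> 'v list \<Rightarrow> 'v list \<Rightarrow> nat \<Rightarrow> nat" where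
  "tcost E c c' i = ecost E (c!i) (c'!i) (load c c' i)"

definition numtgt :: "'v \<Rightarrow> 'v list \<Rightarrow> nat" where
  "numtgt tgt c = card {i. i < length c \<and> c!i = tgt}"

definition dev :: "'v set \<Rightarrow> 'v edges \<Rightarrow> nat \<Rightarrow> nat \<Rightarrow> 'v list \<Rightarrow> 'v list \<Rightarrow> 'v list set" where
  "dev V E n i c c' = {c''. is_trans V E n c c'' \<and> (\<forall>l<n. l \<noteq> i \<longrightarrow> c''!l = c'!l)}"

definition is_path :: "'v set \<Rightarrow> 'v edges \<Rightarrow> nat \<Rightarrow> 'v list \<Rightarrow> (nat \<Rightarrow> 'v list) \<Rightarrow> bool" where
  "is_path V E n c p \<longleftrightarrow> p 0 = c \<and> (\<forall>k. is_trans V E n (p k) (p (Suc k)))"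

definition hit :: "'v \<Rightarrow> nat \<Rightarrow> (nat \<Rightarrow> 'v list) \<Rightarrow> nat" where
  "hit tgt n p = (LEAST k. p k = ctgt tgt n)"

text \<open>cost_i(rho_{>=k}); after reaching c_tgt only the 0-cost self-loop is possible,
  so the (infinite) total equals the finite sum up to the first visit of c_tgt.\<close>
definition scost :: "'v edges \<Rightarrow> 'v \<Rightarrow> nat \<Rightarrow> (nat \<Rightarrow> 'v list) \<Rightarrow> nat \<Rightarrow> nat \<Rightarrow> nat" where
  "scost E tgt n p i k = (\<Sum>m\<in>{k..<hit tgt n p}. tcost E (p m) (p (Suc m)) i)"

definition Lambda :: "'v set \<Rightarrow> 'v edges \<Rightarrow> 'v \<Rightarrow> nat \<Rightarrow> (nat \<Rightarrow> 'v transition \<Rightarrow> ereal)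
                       \<Rightarrow> 'v list \<Rightarrow> (nat \<Rightarrow> 'v list) set" where
  "Lambda V E tgt n lam c = {p. is_path V E n c p \<and> (\<exists>k. p k = ctgt tgt n) \<and>
      (\<forall>i<n. \<forall>k. ereal (real (scost E tgt n p i k)) \<le> lam i (p k, p (Suc k)))}"

text \<open>The lambda^{j*}-building functions mu^k (lamnext = lambda^{(j+1)*}).\<close>
primrec mu_seq :: "'v set \<Rightarrow> 'v edges \<Rightarrow> 'v \<Rightarrow> nat \<Rightarrow> nat \<Rightarrow> (nat \<Rightarrow> 'v transition \<Rightarrow> ereal)
                    \<Rightarrow> nat \<Rightarrow> (nat \<Rightarrow> 'v transition \<Rightarrow> ereal)" where
  "mu_seq V E tgt n j lamnext 0 = (\<lambda>i (c, c').
      if Suc j \<le> numtgt tgt c then lamnext i (c, c')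
      else if c!i = tgt then 0 else \<infinity>)"
| "mu_seq V E tgt n j lamnext (Suc k) = (\<lambda>i (c, c').
      if Suc j \<le> numtgt tgt c then lamnext i (c, c')
      else if c!i = tgt then 0
      else if (\<forall>ct. is_trans V E n c ct \<longrightarrow>
                   Lambda V E tgt n (mu_seq V E tgt n j lamnext k) ct \<noteq> {})
      then Inf ((\<lambda>c''. Sup ((\<lambda>p. ereal (real (tcost E c c'' i + scost E tgt n p i 0)))
                        ` Lambda V E tgt n (mu_seq V E tgt n j lamnext k) c''))
                ` dev V E n i c c')
      else - \<infinity>)"

text \<open>lam_d d = lambda^{(n-d)*}.\<close>
primrec lam_d :: "'v set \<Rightarrow> 'v edges \<Rightarrow> 'v \<Rightarrow> nat \<Rightarrow> nat \<Rightarrow> (nat \<Rightarrow> 'v transition \<Rightarrow> ereal)" where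
  "lam_d V E tgt n 0 = (\<lambda>i e. 0)"
| "lam_d V E tgt n (Suc d) = (\<lambda>i e.
      lim (\<lambda>k. mu_seq V E tgt n (n - Suc d) (lam_d V E tgt n d) k i e))"

definition lamstar :: "'v set \<Rightarrow> 'v edges \<Rightarrow> 'v \<Rightarrow> nat \<Rightarrow> nat \<Rightarrow> nat \<Rightarrow> 'v transition \<Rightarrow> ereal" where
  "lamstar V E tgt n j = lam_d V E tgt n (n - j)"

end

theory Submission
  imports Defs
begin

text \<open>Let d(v) be the length of a shortest path from v to tgt in the arena. The values of d
  along such a path fill {0..d(v)}, so d(v) < |V|. By induction on the level and then on k,
  \<mu>^k_i(c,c') \<le> d(c(i)) * \<kappa> whenever d(c(i)) \<le> k: player i can deviate to the next vertex
  of a shortest path, paying at most \<kappa> because costs are monotone and at most n players share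
  an edge, and every admissible path from there costs player i at most (d(c(i)) - 1) * \<kappa>.
  Since \<mu>^k decreases in k, its limit is at most \<mu>^k for k = d(c(i)).\<close>

definition edge_rel :: "'v edges \<Rightarrow> ('v \<times> 'v) set" where
  "edge_rel E = {(x, y). E x y \<noteq> None}"

definition tgt_dist :: "'v edges \<Rightarrow> 'v \<Rightarrow> 'v \<Rightarrow> nat" where
  "tgt_dist E tgt v = (LEAST m. (v, tgt) \<in> edge_rel E ^^ m)"

lemma arena_edgeD:
  assumes "arena V E src tgt" "E u v = Some f"
  shows "u \<in> V" "v \<in> V" "mono f"
  using assms unfolding arena_def by blast+

lemma relpow_tgt_dist:
  assumes "arena V E src tgt" "v \<in> V"
  shows "(v, tgt) \<in> edge_rel E ^^ tgt_dist E tgt v"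
proof -
  have "(v, tgt) \<in> (edge_rel E)\<^sup>*" using assms unfolding arena_def edge_rel_def by blast
  then obtain m where "(v, tgt) \<in> edge_rel E ^^ m" using rtrancl_power by blast
  then show ?thesis unfolding tgt_dist_def by (rule LeastI)
qed

lemma tgt_dist_le:
  assumes "(v, tgt) \<in> edge_rel E ^^ m"
  shows "tgt_dist E tgt v \<le> m"
  unfolding tgt_dist_def using assms by (rule Least_le)

lemma tgt_dist_eq_0_iff:
  assumes "arena V E src tgt" "v \<in> V"
  shows "tgt_dist E tgt v = 0 \<longleftrightarrow> v = tgt"
  using relpow_tgt_dist[OF assms] tgt_dist_le[where v=tgt and tgt=tgt and E=E and m=0] by auto

lemma tgt_dist_SucE:
  assumes "arena V E src tgt" "v \<in> V" "tgt_dist E tgt v = Suc m"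
  obtains y f where "E v y = Some f" "y \<in> V" "tgt_dist E tgt y = m"
proof -
  have "(v, tgt) \<in> edge_rel E ^^ Suc m" using relpow_tgt_dist[OF assms(1,2)] unfolding assms(3) .
  then obtain y where vy: "(v, y) \<in> edge_rel E" and y_tgt: "(y, tgt) \<in> edge_rel E ^^ m"
    using relpow_Suc_D2 by metis
  then obtain f where f: "E v y = Some f" unfolding edge_rel_def by auto
  then have "y \<in> V" using arena_edgeD[OF assms(1)] by blast
  have "(v, tgt) \<in> edge_rel E ^^ Suc (tgt_dist E tgt y)"
    using relpow_Suc_I2[OF vy relpow_tgt_dist[OF assms(1) \<open>y \<in> V\<close>]] .
  then have "Suc m \<le> Suc (tgt_dist E tgt y)" unfolding assms(3)[symmetric] by (rule tgt_dist_le)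
  with tgt_dist_le[OF y_tgt] have "tgt_dist E tgt y = m" by simp
  with f \<open>y \<in> V\<close> show ?thesis by (rule that)
qed

lemma tgt_dist_range:
  assumes "arena V E src tgt" "v \<in> V"
  shows "{0..tgt_dist E tgt v} \<subseteq> tgt_dist E tgt ` V"
  using assms(2)
proof (induction "tgt_dist E tgt v" arbitrary: v)
  case 0
  then show ?case by auto
next
  case (Suc m)
  obtain y f where "y \<in> V" "tgt_dist E tgt y = m"
    using tgt_dist_SucE[OF assms(1) Suc.prems Suc.hyps(2)[symmetric]] .
  then have "{0..m} \<subseteq> tgt_dist E tgt ` V" using Suc.hyps(1) by blast
  moreover have "Suc m \<in> tgt_dist E tgt ` V" using Suc.hyps(2) Suc.prems by force
  ultimately show ?case using atLeast0_atMost_Suc[of m] Suc.hyps(2) by (metis insert_subset)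
qed

lemma tgt_dist_less_card:
  assumes "arena V E src tgt" "v \<in> V"
  shows "tgt_dist E tgt v < card V"
proof -
  have "finite V" using assms(1) unfolding arena_def by blast
  have "card {0..tgt_dist E tgt v} \<le> card (tgt_dist E tgt ` V)"
    using card_mono[OF finite_imageI[OF \<open>finite V\<close>] tgt_dist_range[OF assms]] .
  also have "\<dots> \<le> card V" using \<open>finite V\<close> by (rule card_image_le)
  finally show ?thesis by simp
qed

lemma edge_cost_le_kappa:
  assumes "arena V E src tgt" "E u v = Some f" "k \<le> n"
  shows "f k \<le> kappa E n"
proof -
  have "{f n | u v f. E u v = Some f} \<subseteq> (\<lambda>(u, v). the (E u v) n) ` (V \<times> V)"
  proof
    fix x assume "x \<in> {f n | u v f. E u v = Some f}"
    then obtain u' v' g where "x = g n" "E u' v' = Some g" by blast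
    with arena_edgeD[OF assms(1) this(2)] show "x \<in> (\<lambda>(u, v). the (E u v) n) ` (V \<times> V)"
      by force
  qed
  moreover have "finite V" using assms(1) unfolding arena_def by blast
  ultimately have "finite {f n | u v f. E u v = Some f}"
    using finite_subset by blast
  then have "f n \<le> kappa E n" unfolding kappa_def using assms(2) by (blast intro: Max_ge)
  moreover have "f k \<le> f n" using arena_edgeD(3)[OF assms(1,2)] assms(3) by (rule monoD)
  ultimately show ?thesis by simp
qed

lemma load_le_length: "load c c' i \<le> length c"
  unfolding load_def by (rule order_trans[OF card_mono[of "{..<length c}"]]) auto

lemma tcost_le_kappa:
  assumes "arena V E src tgt" "length c = n" "E (c!i) (c'!i) = Some f"
  shows "tcost E c c' i \<le> kappa E n"
  using edge_cost_le_kappa[OF assms(1,3)] load_le_length[of c c' i] assms(2,3)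
  unfolding tcost_def ecost_def by simp

lemma Lambda_mono:
  assumes "\<And>i e. lam i e \<le> lam' i e"
  shows "Lambda V E tgt n lam c \<subseteq> Lambda V E tgt n lam' c"
  unfolding Lambda_def using assms order_trans by blast

definition mu_step :: "'v set \<Rightarrow> 'v edges \<Rightarrow> 'v \<Rightarrow> nat \<Rightarrow> nat \<Rightarrow> (nat \<Rightarrow> 'v transition \<Rightarrow> ereal)
    \<Rightarrow> (nat \<Rightarrow> 'v transition \<Rightarrow> ereal) \<Rightarrow> nat \<Rightarrow> 'v transition \<Rightarrow> ereal" where
  "mu_step V E tgt n j lamnext lam = (\<lambda>i (c, c').
      if Suc j \<le> numtgt tgt c then lamnext i (c, c')
      else if c!i = tgt then 0
      else if (\<forall>ct. is_trans V E n c ct \<longrightarrow> Lambda V E tgt n lam ct \<noteq> {})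
      then INF c''\<in>dev V E n i c c'. SUP p\<in>Lambda V E tgt n lam c''.
             ereal (real (tcost E c c'' i + scost E tgt n p i 0))
      else - \<infinity>)"

lemma mu_seq_Suc:
  "mu_seq V E tgt n j lamnext (Suc k) = mu_step V E tgt n j lamnext (mu_seq V E tgt n j lamnext k)"
  by (simp add: mu_step_def)

lemma mu_step_mono:
  assumes "\<And>i e. lam i e \<le> lam' i e"
  shows "mu_step V E tgt n j lamnext lam i (c, c') \<le> mu_step V E tgt n j lamnext lam' i (c, c')"
proof -
  have sub: "\<And>c. Lambda V E tgt n lam c \<subseteq> Lambda V E tgt n lam' c"
    by (rule Lambda_mono) (rule assms)
  have "(INF c''\<in>dev V E n i c c'. SUP p\<in>Lambda V E tgt n lam c''.
           ereal (real (tcost E c c'' i + scost E tgt n p i 0)))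
        \<le> (INF c''\<in>dev V E n i c c'. SUP p\<in>Lambda V E tgt n lam' c''.
           ereal (real (tcost E c c'' i + scost E tgt n p i 0)))"
    by (intro INF_mono' SUP_subset_mono sub order_refl)
  moreover have "(\<forall>ct. is_trans V E n c ct \<longrightarrow> Lambda V E tgt n lam ct \<noteq> {})
      \<Longrightarrow> (\<forall>ct. is_trans V E n c ct \<longrightarrow> Lambda V E tgt n lam' ct \<noteq> {})"
    using sub by blast
  ultimately show ?thesis unfolding mu_step_def by auto
qed

lemma mu_seq_Suc_le:
  "mu_seq V E tgt n j lamnext (Suc k) i (c, c') \<le> mu_seq V E tgt n j lamnext k i (c, c')"
proof (induction k arbitrary: i c c')
  case 0
  show ?case by simp
next
  case (Suc k)
  then show ?case unfolding mu_seq_Suc[of _ _ _ _ _ _ "Suc k"] mu_seq_Suc[of _ _ _ _ _ _ k]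
    by (intro mu_step_mono) (metis surj_pair)
qed

lemma lim_mu_seq_le:
  "lim (\<lambda>k. mu_seq V E tgt n j lamnext k i e) \<le> mu_seq V E tgt n j lamnext k i e"
proof -
  let ?X = "\<lambda>k. mu_seq V E tgt n j lamnext k i e"
  have "decseq ?X" by (intro decseq_SucI) (metis mu_seq_Suc_le surj_pair)
  then have "lim ?X = (INF k. ?X k)" by (intro limI LIMSEQ_INF)
  also have "\<dots> \<le> ?X k" by (rule INF_lower) simp
  finally show ?thesis .
qed

lemma is_trans_nth_mem:
  assumes "is_trans V E n c c'" "i < n"
  shows "c!i \<in> V"
  using assms unfolding is_trans_def by auto

definition dist_bound :: "'v edges \<Rightarrow> 'v \<Rightarrow> nat \<Rightarrow> nat \<Rightarrow> 'v list \<Rightarrow> ereal" where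
  "dist_bound E tgt n i c = ereal (real (tgt_dist E tgt (c!i) * kappa E n))"

lemma dist_bound_nonneg [simp]: "0 \<le> dist_bound E tgt n i c"
  by (simp add: dist_bound_def)

lemma dev_along_edgeE:
  assumes "arena V E src tgt" "i < n" "is_trans V E n c c'" "E (c!i) y = Some f"
  obtains c'' where "c'' \<in> dev V E n i c c'" "c''!i = y" "tcost E c c'' i \<le> kappa E n"
proof
  have "length c' = n" "length c = n" using assms(3) unfolding is_trans_def by simp_all
  then show "c'[i := y] \<in> dev V E n i c c'" and "c'[i := y] ! i = y"
    using assms(2-4) unfolding dev_def is_trans_def by (auto simp: nth_list_update)
  with \<open>length c = n\<close> show "tcost E c (c'[i := y]) i \<le> kappa E n"
    using tcost_le_kappa[OF assms(1)] assms(4) by simp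
qed

lemma mu_step_le_dist_bound:
  assumes ar: "arena V E src tgt"
    and lamnext: "\<And>i c c'. i < n \<Longrightarrow> is_trans V E n c c' \<Longrightarrow> lamnext i (c, c') \<le> dist_bound E tgt n i c"
    and lam: "\<And>i c c'. i < n \<Longrightarrow> is_trans V E n c c' \<Longrightarrow> tgt_dist E tgt (c!i) \<le> k \<Longrightarrow>
                 lam i (c, c') \<le> dist_bound E tgt n i c"
    and i: "i < n" and tr: "is_trans V E n c c'" and dist: "tgt_dist E tgt (c!i) \<le> Suc k"
  shows "mu_step V E tgt n j lamnext lam i (c, c') \<le> dist_bound E tgt n i c"
proof -
  have ciV: "c!i \<in> V" using is_trans_nth_mem[OF tr i] .
  consider (trivial) "Suc j \<le> numtgt tgt c \<or> c!i = tgt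
      \<or> \<not> (\<forall>ct. is_trans V E n c ct \<longrightarrow> Lambda V E tgt n lam ct \<noteq> {})"
    | (deviate) "\<not> Suc j \<le> numtgt tgt c" "c!i \<noteq> tgt"
        "\<forall>ct. is_trans V E n c ct \<longrightarrow> Lambda V E tgt n lam ct \<noteq> {}"
    by blast
  then show ?thesis
  proof cases
    case trivial
    then show ?thesis using lamnext[OF i tr] unfolding mu_step_def by auto
  next
    case deviate
    obtain m where m: "tgt_dist E tgt (c!i) = Suc m"
      using tgt_dist_eq_0_iff[OF ar ciV] deviate(2) not0_implies_Suc by blast
    obtain y f where y: "E (c!i) y = Some f" "tgt_dist E tgt y = m"
      using tgt_dist_SucE[OF ar ciV m] by blast
    obtain c'' where c'': "c'' \<in> dev V E n i c c'" "c''!i = y" "tcost E c c'' i \<le> kappa E n"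
      using dev_along_edgeE[OF ar i tr y(1)] by blast
    have "scost E tgt n p i 0 \<le> m * kappa E n" if p: "p \<in> Lambda V E tgt n lam c''" for p
    proof -
      have "p 0 = c''" "is_trans V E n (p 0) (p (Suc 0))"
        and "ereal (real (scost E tgt n p i 0)) \<le> lam i (p 0, p (Suc 0))"
        using p i unfolding Lambda_def is_path_def by blast+
      with lam[OF i] c''(2) y(2) m dist show ?thesis
        unfolding dist_bound_def by (metis Suc_le_mono order_trans ereal_less_eq(3) of_nat_le_iff)
    qed
    with c''(3) m have "tcost E c c'' i + scost E tgt n p i 0 \<le> tgt_dist E tgt (c!i) * kappa E n"
      if "p \<in> Lambda V E tgt n lam c''" for p
      using that by (simp add: add_mono)
    then have "(SUP p\<in>Lambda V E tgt n lam c''.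
        ereal (real (tcost E c c'' i + scost E tgt n p i 0))) \<le> dist_bound E tgt n i c"
      unfolding dist_bound_def by (intro SUP_least) (simp only: ereal_less_eq(3) of_nat_le_iff)
    then have "(INF c''\<in>dev V E n i c c'. SUP p\<in>Lambda V E tgt n lam c''.
        ereal (real (tcost E c c'' i + scost E tgt n p i 0))) \<le> dist_bound E tgt n i c"
      using c''(1) by (meson INF_lower order_trans)
    then show ?thesis unfolding mu_step_def using deviate by simp
  qed
qed

lemma mu_seq_le_dist_bound:
  assumes ar: "arena V E src tgt"
    and lamnext: "\<And>i c c'. i < n \<Longrightarrow> is_trans V E n c c' \<Longrightarrow> lamnext i (c, c') \<le> dist_bound E tgt n i c"
    and "i < n" "is_trans V E n c c'" "tgt_dist E tgt (c!i) \<le> k"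
  shows "mu_seq V E tgt n j lamnext k i (c, c') \<le> dist_bound E tgt n i c"
  using assms(3-)
proof (induction k arbitrary: i c c')
  case 0
  then have "c!i = tgt" using tgt_dist_eq_0_iff[OF ar is_trans_nth_mem] by blast
  with 0 lamnext show ?case by simp
next
  case (Suc k)
  show ?case unfolding mu_seq_Suc
    by (rule mu_step_le_dist_bound[OF ar lamnext _ Suc.prems]) (use Suc.IH in blast)+
qed

lemma lam_d_le_dist_bound:
  assumes "arena V E src tgt" "i < n" "is_trans V E n c c'"
  shows "lam_d V E tgt n d i (c, c') \<le> dist_bound E tgt n i c"
  using assms(2,3)
proof (induction d arbitrary: i c c')
  case 0
  then show ?case by simp
next
  case (Suc d)
  have "lam_d V E tgt n (Suc d) i (c, c')
      \<le> mu_seq V E tgt n (n - Suc d) (lam_d V E tgt n d) (tgt_dist E tgt (c!i)) i (c, c')"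
    using lim_mu_seq_le by simp
  also have "\<dots> \<le> dist_bound E tgt n i c"
    using mu_seq_le_dist_bound[OF assms(1) Suc.IH Suc.prems] by blast
  finally show ?case .
qed

theorem corollaryC9:
  fixes V :: "'v set" and E :: "'v edges" and src tgt :: 'v and n j i :: nat
    and c c' :: "'v list"
  assumes "arena V E src tgt"
    and "j \<le> n"
    and "i < n"
    and "is_trans V E n c c'"
    and "j \<le> numtgt tgt c"
  shows "lamstar V E tgt n j i (c, c') \<le> ereal (real (card V * kappa E n))"
proof -
  \<comment> \<open>The bound holds on every transition.\<close>
  have "c!i \<in> V" using is_trans_nth_mem[OF assms(4,3)] .
  have "lamstar V E tgt n j i (c, c') \<le> dist_bound E tgt n i c"
    unfolding lamstar_def using lam_d_le_dist_bound[OF assms(1,3,4)] .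
  also have "\<dots> \<le> ereal (real (card V * kappa E n))"
    using less_imp_le[OF tgt_dist_less_card[OF assms(1) \<open>c!i \<in> V\<close>]]
    unfolding dist_bound_def by (simp add: mult_right_mono)
  finally show ?thesis .
qed

end
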